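(* Let $\mathcal K$ be a complex Hilbert space and $\mu$ a $\mathcal K$-Carleson measure. If there exists a countable set $N\subseteq\mathbb R_+$ with $\sum_{\lambda\in N}\frac{\lambda}{(\lambda+1)^2}<\infty$ such that the operator $\mu(\mathbb R_+\setminus N)$ is not strictly positive, then $H_\mu$ is not strictly positive.
   Context: $\mathbb R_+=(0,\infty)$. $H^2(\mathbb C_+,\mathcal K)$ is the Hardy space of holomorphic $f:\mathbb C_+\to\mathcal K$ with $\sup_{y>0}\int\|f(x+iy)\|^2dx<\infty$. A $\mathcal K$-Carleson measure is a measure $\mu$ on $\mathbb R_+$ with values in the positive bounded operators on $\mathcal K$ such that $(f,g)\mapsto\int_{\mathbb R_+}\langle f(i\lambda),d\mu(\lambda)g(i\lambda)\rangle$ is a continuous sesquilinear form on $H^2(\mathbb C_+,\mathcal K)$; $H_\mu$ is the bounded operator representing it. An operator $A$ is strictly positive if $\langle v,Av\rangle>0$ for all $v\ne0$. *)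

theory Defs
  imports "HOL-Analysis.Analysis"
begin

text \<open>HOL-Analysis only has real inner product spaces.  A complex inner product
space is modelled as a real inner product space with a complex scalar
multiplication extending the real one, such that multiplication by i is
orthogonal; the real inner product is then the real part of the complex one.
A complex Hilbert space is such a space which is moreover complete.\<close>

class complex_inner = real_inner +
  fixes cscale :: "complex \<Rightarrow> 'a \<Rightarrow> 'a"
  assumes cscale_add_right: "cscale a (x + y) = cscale a x + cscale a y"
    and cscale_add_left: "cscale (a + b) x = cscale a x + cscale b x"
    and cscale_cscale: "cscale a (cscale b x) = cscale (a * b) x"
    and cscale_of_real: "cscale (complex_of_real r) x = r *\<^sub>R x"
    and inner_cscale_ii: "inner (cscale \<i> x) (cscale \<i> y) = inner x y"

instantiation complex :: complex_inner
begin
definition cscale_complex :: "complex \<Rightarrow> complex \<Rightarrow> complex" where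
  "cscale_complex a x = a * x"
instance
  by standard (auto simp: cscale_complex_def algebra_simps inner_complex_def scaleR_conv_of_real)
end

text \<open>Complex inner product, antilinear in the first and linear in the second argument.\<close>
definition cinner :: "'a::complex_inner \<Rightarrow> 'a \<Rightarrow> complex" where
  "cinner x y = Complex (inner x y) (- inner x (cscale \<i> y))"

definition bounded_clinear_op :: "('a::complex_inner \<Rightarrow> 'a) \<Rightarrow> bool" where
  "bounded_clinear_op T \<longleftrightarrow>
     (\<forall>x y. T (x + y) = T x + T y) \<and> (\<forall>c x. T (cscale c x) = cscale c (T x)) \<and>
     (\<exists>K. \<forall>x. norm (T x) \<le> K * norm x)"

definition positive_op :: "('a::complex_inner \<Rightarrow> 'a) \<Rightarrow> bool" where
  "positive_op T \<longleftrightarrow> (\<forall>v. cinner v (T v) \<in> \<real> \<and> Re (cinner v (T v)) \<ge> 0)"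

definition strictly_positive_op :: "('a::complex_inner \<Rightarrow> 'a) \<Rightarrow> bool" where
  "strictly_positive_op T \<longleftrightarrow>
     (\<forall>v. v \<noteq> 0 \<longrightarrow> cinner v (T v) \<in> \<real> \<and> Re (cinner v (T v)) > 0)"

definition pos_op_measure :: "(real set \<Rightarrow> 'a::complex_inner \<Rightarrow> 'a) \<Rightarrow> bool" where
  "pos_op_measure \<mu> \<longleftrightarrow>
     (\<forall>A \<in> sets borel. A \<subseteq> {0<..} \<longrightarrow> bounded_clinear_op (\<mu> A) \<and> positive_op (\<mu> A)) \<and>
     (\<forall>v. \<mu> {} v = 0) \<and>
     (\<forall>A :: nat \<Rightarrow> real set. (\<forall>n. A n \<in> sets borel \<and> A n \<subseteq> {0<..}) \<longrightarrow> disjoint_family A \<longrightarrow>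
        (\<forall>u v. (\<lambda>n. cinner u (\<mu> (A n) v)) sums cinner u (\<mu> (\<Union>n. A n) v)))"

definition rs_sum ::
  "(real set \<Rightarrow> 'a::complex_inner \<Rightarrow> 'a) \<Rightarrow> (real \<Rightarrow> 'a) \<Rightarrow> (real \<Rightarrow> 'a) \<Rightarrow>
   (nat \<Rightarrow> real) \<Rightarrow> (nat \<Rightarrow> real) \<Rightarrow> nat \<Rightarrow> complex" where
  "rs_sum \<mu> f g s t n = (\<Sum>k<n. cinner (f (t k)) (\<mu> {s k<..s (Suc k)} (g (t k))))"

text \<open>\<open>I = \<integral>_{(a,b]} \<langle>f, d\<mu> g\<rangle>\<close> as limit of Riemann--Stieltjes sums as the mesh tends to 0
(used for continuous \<open>f, g\<close>, where it agrees with the measure-theoretic integral).\<close>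
definition has_op_int_on ::
  "(real set \<Rightarrow> 'a::complex_inner \<Rightarrow> 'a) \<Rightarrow> (real \<Rightarrow> 'a) \<Rightarrow> (real \<Rightarrow> 'a) \<Rightarrow>
   real \<Rightarrow> real \<Rightarrow> complex \<Rightarrow> bool" where
  "has_op_int_on \<mu> f g a b I \<longleftrightarrow>
     (\<forall>\<epsilon>>0. \<exists>\<delta>>0. \<forall>n s t. s 0 = a \<and> s n = b \<and>
        (\<forall>k<n. s k < s (Suc k) \<and> s (Suc k) - s k < \<delta> \<and> t k \<in> {s k..s (Suc k)}) \<longrightarrow>
        cmod (rs_sum \<mu> f g s t n - I) < \<epsilon>)"

definition op_int_on ::
  "(real set \<Rightarrow> 'a::complex_inner \<Rightarrow> 'a) \<Rightarrow> (real \<Rightarrow> 'a) \<Rightarrow> (real \<Rightarrow> 'a) \<Rightarrow> real \<Rightarrow> real \<Rightarrow> complex" where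
  "op_int_on \<mu> f g a b = (THE I. has_op_int_on \<mu> f g a b I)"

definition has_op_int ::
  "(real set \<Rightarrow> 'a::complex_inner \<Rightarrow> 'a) \<Rightarrow> (real \<Rightarrow> 'a) \<Rightarrow> (real \<Rightarrow> 'a) \<Rightarrow> complex \<Rightarrow> bool" where
  "has_op_int \<mu> f g L \<longleftrightarrow>
     (\<forall>a b. 0 < a \<and> a < b \<longrightarrow> (\<exists>I. has_op_int_on \<mu> f g a b I)) \<and>
     ((\<lambda>(a, b). op_int_on \<mu> f g a b) \<longlongrightarrow> L) (at_right 0 \<times>\<^sub>F at_top)"

definition op_int ::
  "(real set \<Rightarrow> 'a::complex_inner \<Rightarrow> 'a) \<Rightarrow> (real \<Rightarrow> 'a) \<Rightarrow> (real \<Rightarrow> 'a) \<Rightarrow> complex" where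
  "op_int \<mu> f g = (THE L. has_op_int \<mu> f g L)"

definition hardy2 :: "(complex \<Rightarrow> 'a::complex_inner) set" where
  "hardy2 = {f. (\<forall>z. Im z > 0 \<longrightarrow> (\<exists>f'. (f has_derivative (\<lambda>h. cscale h f')) (at z))) \<and>
               (SUP y\<in>{0<..}. \<integral>\<^sup>+ x. ennreal ((norm (f (Complex x y)))\<^sup>2) \<partial>lborel) < \<infinity>}"

definition h2_norm :: "(complex \<Rightarrow> 'a::complex_inner) \<Rightarrow> real" where
  "h2_norm f = sqrt (enn2real (SUP y\<in>{0<..}. \<integral>\<^sup>+ x. ennreal ((norm (f (Complex x y)))\<^sup>2) \<partial>lborel))"

definition on_iaxis :: "(complex \<Rightarrow> 'a) \<Rightarrow> real \<Rightarrow> 'a" where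
  "on_iaxis f = (\<lambda>l. f (Complex 0 l))"

definition carleson_form :: "(real set \<Rightarrow> 'a::complex_inner \<Rightarrow> 'a) \<Rightarrow> (complex \<Rightarrow> 'a) \<Rightarrow> (complex \<Rightarrow> 'a) \<Rightarrow> complex" where
  "carleson_form \<mu> f g = op_int \<mu> (on_iaxis f) (on_iaxis g)"

definition K_carleson :: "(real set \<Rightarrow> 'a::complex_inner \<Rightarrow> 'a) \<Rightarrow> bool" where
  "K_carleson \<mu> \<longleftrightarrow> pos_op_measure \<mu> \<and>
     (\<forall>f\<in>hardy2. \<forall>g\<in>hardy2. \<exists>L. has_op_int \<mu> (on_iaxis f) (on_iaxis g) L) \<and>
     (\<exists>C. \<forall>f\<in>hardy2. \<forall>g\<in>hardy2. cmod (carleson_form \<mu> f g) \<le> C * h2_norm f * h2_norm g)"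

text \<open>\<open>H\<^sub>\<mu>\<close> is the bounded operator on \<open>H\<^sup>2\<close> with \<open>\<langle>f, H\<^sub>\<mu> g\<rangle>\<^sub>H\<^sub>2 = carleson_form \<mu> f g\<close>; hence
\<open>H\<^sub>\<mu>\<close> is strictly positive iff \<open>carleson_form \<mu> f f > 0\<close> for every nonzero \<open>f \<in> H\<^sup>2\<close>
(an element of \<open>H\<^sup>2\<close> is zero iff it vanishes on the upper half plane).\<close>
definition H_mu_strictly_positive :: "(real set \<Rightarrow> 'a::complex_inner \<Rightarrow> 'a) \<Rightarrow> bool" where
  "H_mu_strictly_positive \<mu> \<longleftrightarrow>
     (\<forall>f\<in>hardy2. (\<exists>z. Im z > 0 \<and> f z \<noteq> 0) \<longrightarrow>
        carleson_form \<mu> f f \<in> \<real> \<and> Re (carleson_form \<mu> f f) > 0)"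

end

theory Submission
  imports Defs "HOL-Complex_Analysis.Complex_Analysis" "HOL-Probability.Sinc_Integral"
begin

text \<open>Choose \<open>v \<noteq> 0\<close> with \<open>\<langle>v, \<mu>(\<real>\<^sub>+ - N) v\<rangle> \<le> 0\<close>; by positivity the scalar measure
  \<open>\<langle>v, \<mu>(\<cdot>) v\<rangle>\<close> is then carried by \<open>N\<close>. Summability of \<open>\<lambda> / (\<lambda> + 1)\<^sup>2\<close> over \<open>N\<close> is the
  Blaschke condition for the points \<open>i\<lambda>\<close>, \<open>\<lambda> \<in> N\<close>, of the upper half plane, so a Blaschke
  product gives a holomorphic \<open>B\<close> with \<open>|B| \<le> 1\<close>, vanishing at these points but not identically
  zero. Then \<open>f(z) = B(z) / (z + i) \<cdot> v\<close> is a nonzero element of \<open>H\<^sup>2\<close>, and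
  \<open>\<langle>f, H\<^sub>\<mu> f\<rangle> = \<integral> |B(i\<lambda>) / (i\<lambda> + i)|\<^sup>2 d\<langle>v, \<mu>(\<lambda>) v\<rangle> = 0\<close> because the integrand
  vanishes on \<open>N\<close>.\<close>

section \<open>Complex scalar multiplication\<close>

lemma cscale_eq_Re_Im: "cscale c x = Re c *\<^sub>R x + Im c *\<^sub>R cscale \<i> x"
proof -
  have c: "c = complex_of_real (Re c) + complex_of_real (Im c) * \<i>" by (simp add: complex_eq_iff)
  have "cscale c x = cscale (complex_of_real (Re c)) x + cscale (complex_of_real (Im c) * \<i>) x"
    by (subst c) (rule cscale_add_left)
  also have "cscale (complex_of_real (Im c) * \<i>) x = Im c *\<^sub>R cscale \<i> x"
    by (simp add: cscale_cscale[symmetric] cscale_of_real)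
  finally show ?thesis by (simp add: cscale_of_real)
qed

lemma cscale_ii_ii: "cscale \<i> (cscale \<i> x) = - x"
  using cscale_of_real[of "-1" x] by (simp add: cscale_cscale)

lemma inner_cscale_ii_left: "inner (cscale \<i> x) y = - inner x (cscale \<i> y)"
  using inner_cscale_ii[of "cscale \<i> x" y] by (simp add: cscale_ii_ii)

lemma inner_cscale_ii_self: "inner x (cscale \<i> x) = 0"
  using inner_cscale_ii_left[of x x] by (simp add: inner_commute)

lemma norm_cscale: "norm (cscale c x) = cmod c * norm x"
proof -
  have "(norm (cscale c x))\<^sup>2 = inner (cscale c x) (cscale c x)"
    by (simp add: power2_norm_eq_inner)
  also have "\<dots> = (Re c)\<^sup>2 * inner x x + (Im c)\<^sup>2 * inner (cscale \<i> x) (cscale \<i> x)"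
    by (simp add: cscale_eq_Re_Im[of c] inner_add_left inner_add_right inner_cscale_ii_self
        inner_commute[of "cscale \<i> x" x] power2_eq_square algebra_simps)
  also have "\<dots> = ((Re c)\<^sup>2 + (Im c)\<^sup>2) * (norm x)\<^sup>2"
    by (simp add: inner_cscale_ii power2_norm_eq_inner algebra_simps)
  also have "\<dots> = (cmod c * norm x)\<^sup>2"
    by (simp add: cmod_power2 power_mult_distrib)
  finally show ?thesis by (simp add: power2_eq_iff_nonneg)
qed

lemma cscale_eq_0_iff: "cscale c x = 0 \<longleftrightarrow> c = 0 \<or> x = 0"
  by (metis norm_cscale norm_eq_zero mult_eq_0_iff)

lemma cscale_scaleR_right: "cscale c (r *\<^sub>R x) = r *\<^sub>R cscale c x"
  by (metis cscale_cscale cscale_of_real mult.commute)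

lemma cscale_zero_right [simp]: "cscale c 0 = 0"
  using cscale_scaleR_right[of c 0 0] by simp

lemma cinner_zero_right [simp]: "cinner x 0 = 0"
  by (simp add: cinner_def complex_eq_iff)

lemma bounded_linear_cscale_left: "bounded_linear (\<lambda>c. cscale c v)"
proof (rule bounded_linear_intro[of _ "norm v"])
  show "cscale (b + c) v = cscale b v + cscale c v" for b c by (rule cscale_add_left)
  show "cscale (r *\<^sub>R b) v = r *\<^sub>R cscale b v" for r b
    by (simp add: scaleR_conv_of_real cscale_cscale[symmetric] cscale_of_real)
  show "norm (cscale b v) \<le> norm b * norm v" for b by (simp add: norm_cscale)
qed

lemma cinner_cscale_right: "cinner x (cscale a y) = a * cinner x y"
proof -
  have ii: "cscale \<i> (cscale a y) = Re a *\<^sub>R cscale \<i> y - Im a *\<^sub>R y"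
    by (simp add: cscale_eq_Re_Im[of a y] cscale_add_right cscale_scaleR_right cscale_ii_ii)
  have "inner x (cscale a y) = Re a * inner x y + Im a * inner x (cscale \<i> y)"
    by (simp add: cscale_eq_Re_Im[of a y] inner_add_right)
  moreover have "inner x (cscale \<i> (cscale a y)) = Re a * inner x (cscale \<i> y) - Im a * inner x y"
    by (simp add: ii inner_diff_right)
  ultimately show ?thesis
    by (simp add: cinner_def complex_eq_iff algebra_simps)
qed

lemma cinner_cscale_left: "cinner (cscale a x) y = cnj a * cinner x y"
  by (simp add: cinner_def cscale_eq_Re_Im[of a x] inner_add_left inner_cscale_ii_left cscale_ii_ii
      complex_eq_iff algebra_simps)

lemma cinner_cscale_self: "cinner (cscale a x) (cscale a y) = of_real ((cmod a)\<^sup>2) * cinner x y"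
  using complex_norm_square[of a] by (simp add: cinner_cscale_left cinner_cscale_right)

lemma has_derivative_cscale_holomorphic:
  assumes "\<phi> holomorphic_on S" "open S" "z \<in> S"
  shows "\<exists>f'. ((\<lambda>z. cscale (\<phi> z) v) has_derivative (\<lambda>h. cscale h f')) (at z)"
proof -
  obtain d where d: "(\<phi> has_field_derivative d) (at z)"
    using assms holomorphic_on_open by blast
  have "((\<lambda>z. cscale (\<phi> z) v) has_derivative (\<lambda>h. cscale (d * h) v)) (at z)"
    by (rule bounded_linear.has_derivative[OF bounded_linear_cscale_left])
       (use d in \<open>simp add: has_field_derivative_def\<close>)
  moreover have "(\<lambda>h. cscale (d * h) v) = (\<lambda>h. cscale h (cscale d v))"
    by (simp add: cscale_cscale mult.commute)
  ultimately show ?thesis by auto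
qed

section \<open>Infinite products of holomorphic functions\<close>

lemma convergent_prod_of_summable_bound:
  fixes f :: "nat \<Rightarrow> 'a::{real_normed_div_algebra, complete_space, comm_ring_1}"
  assumes "summable W" "\<And>n. norm (f n - 1) \<le> W n"
  shows "convergent_prod f"
proof -
  have "summable (\<lambda>n. norm (f n - 1))"
    using assms(2) by (intro summable_comparison_test'[OF assms(1), where N = 0]) simp
  then show ?thesis
    by (rule abs_convergent_prod_imp_convergent_prod[OF summable_imp_abs_convergent_prod])
qed

lemma uniform_limit_prodinf_m_test:
  fixes F :: "nat \<Rightarrow> 'a::topological_space \<Rightarrow> complex"
  assumes K: "compact K" "\<And>n. continuous_on K (F n)"
    and W: "summable W" "\<And>n z. z \<in> K \<Longrightarrow> norm (F n z - 1) \<le> W n"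
  shows "uniform_limit K (\<lambda>M z. \<Prod>n<M. F n z) (\<lambda>z. \<Prod>n. F n z) sequentially"
proof -
  have "uniformly_convergent_on K (\<lambda>M z. \<Sum>n<M. norm (F n z - 1))"
    by (rule Weierstrass_m_test'[OF _ W(1)]) (simp add: W(2))
  then have "uniformly_convergent_on K (\<lambda>M z. \<Prod>n<M. F n z)"
    using K by (intro uniformly_convergent_on_prod')
  then obtain h where h: "uniform_limit K (\<lambda>M z. \<Prod>n<M. F n z) h sequentially"
    by (auto simp: uniformly_convergent_on_def)
  have h_eq: "h z = (\<Prod>n. F n z)" if "z \<in> K" for z
  proof (rule LIMSEQ_unique[OF tendsto_uniform_limitI[OF h that]])
    show "(\<lambda>M. \<Prod>n<M. F n z) \<longlonglongrightarrow> (\<Prod>n. F n z)"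
      using convergent_prod_of_summable_bound[OF W(1) W(2)[OF that]]
      by (intro has_prod_imp_tendsto' convergent_prod_has_prod)
  qed
  show ?thesis
    using h by (rule uniform_limit_cong'[THEN iffD1, rotated 2]) (simp_all add: h_eq)
qed

lemma holomorphic_on_prodinf:
  fixes F :: "nat \<Rightarrow> complex \<Rightarrow> complex"
  assumes S: "open S" and holo: "\<And>n. F n holomorphic_on S"
    and c: "continuous_on S c" and W: "summable W" "\<And>n. W n \<ge> 0"
    and bound: "\<And>n z. z \<in> S \<Longrightarrow> norm (F n z - 1) \<le> c z * W n"
  shows "(\<lambda>z. \<Prod>n. F n z) holomorphic_on S"
proof (rule holomorphic_uniform_sequence[OF S, where f = "\<lambda>M z. \<Prod>n<M. F n z"])
  show "(\<lambda>z. \<Prod>n<M. F n z) holomorphic_on S" for M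
    using holo by (intro holomorphic_on_prod) auto
next
  fix z0 assume "z0 \<in> S"
  then obtain r where r: "r > 0" "cball z0 r \<subseteq> S" using S open_contains_cball by blast
  have "compact (c ` cball z0 r)"
    using r(2) by (intro compact_continuous_image continuous_on_subset[OF c]) auto
  then obtain C where "\<And>z. z \<in> cball z0 r \<Longrightarrow> norm (c z) \<le> C"
    using compact_imp_bounded bounded_iff by (metis imageI)
  then have C: "c z * W n \<le> C * W n" if "z \<in> cball z0 r" for z n
    using that W(2) by (intro mult_right_mono) force+
  have "uniform_limit (cball z0 r) (\<lambda>M z. \<Prod>n<M. F n z) (\<lambda>z. \<Prod>n. F n z) sequentially"
  proof (rule uniform_limit_prodinf_m_test[OF compact_cball])
    show "continuous_on (cball z0 r) (F n)" for n
      using holomorphic_on_imp_continuous_on[OF holomorphic_on_subset[OF holo r(2)]] .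
    show "summable (\<lambda>n. C * W n)" using W(1) by (rule summable_mult)
    show "norm (F n z - 1) \<le> C * W n" if "z \<in> cball z0 r" for n z
      using bound[of z n] C[OF that, of n] r(2) that by force
  qed
  then show "\<exists>d>0. cball z0 d \<subseteq> S \<and>
      uniform_limit (cball z0 d) (\<lambda>M z. \<Prod>n<M. F n z) (\<lambda>z. \<Prod>n. F n z) sequentially"
    using r by (intro exI[of _ r]) simp
qed

section \<open>Blaschke products on the upper half plane\<close>

text \<open>The factor for the zero \<open>\<i> l\<close> is normalised to tend to 1 both as \<open>l \<rightarrow> 0\<close> and as
  \<open>l \<rightarrow> \<infinity>\<close>; this is why the Blaschke condition for zeros on the imaginary axis reads
  \<open>\<Sum> l / (l + 1)\<^sup>2 < \<infinity>\<close>.\<close>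

definition blaschke_factor :: "real \<Rightarrow> complex \<Rightarrow> complex" where
  "blaschke_factor l z = (if l \<le> 1 then (z - \<i> * of_real l) / (z + \<i> * of_real l)
                          else (\<i> * of_real l - z) / (z + \<i> * of_real l))"

lemma Im_le_norm_add_ii:
  assumes "Im z > 0" "l \<ge> 0"
  shows "Im z + l \<le> norm (z + \<i> * of_real l)"
  using abs_Im_le_cmod[of "z + \<i> * of_real l"] assms by simp

lemma add_ii_nonzero: "Im z > 0 \<Longrightarrow> l \<ge> 0 \<Longrightarrow> z + \<i> * of_real l \<noteq> 0"
  using Im_le_norm_add_ii[of z l] by auto

lemma norm_blaschke_factor_le_1:
  assumes "Im z > 0" "l \<ge> 0"
  shows "norm (blaschke_factor l z) \<le> 1"
proof -
  have "(norm (z - \<i> * of_real l))\<^sup>2 = (Re z)\<^sup>2 + (Im z - l)\<^sup>2"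
    by (simp add: cmod_power2)
  also have "\<dots> \<le> (Re z)\<^sup>2 + (Im z + l)\<^sup>2"
    using assms by (simp add: power2_eq_square algebra_simps)
  also have "\<dots> = (norm (z + \<i> * of_real l))\<^sup>2"
    by (simp add: cmod_power2)
  finally have "norm (z - \<i> * of_real l) \<le> norm (z + \<i> * of_real l)"
    by (simp add: power2_le_iff_abs_le)
  moreover have "norm (\<i> * of_real l - z) = norm (z - \<i> * of_real l)"
    by (rule norm_minus_commute)
  ultimately show ?thesis
    using add_ii_nonzero[OF assms] by (auto simp: blaschke_factor_def norm_divide divide_le_eq_1)
qed

lemma blaschke_factor_imaginary_axis: "l > 0 \<Longrightarrow> blaschke_factor l (Complex 0 l) = 0"
  using complex_eq_iff[of "Complex 0 l" "\<i> * of_real l"] by (simp add: blaschke_factor_def)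

lemma blaschke_factor_nonzero:
  assumes "Re z \<noteq> 0"
  shows "blaschke_factor l z \<noteq> 0"
proof -
  have "z - \<i> * of_real l \<noteq> 0" "z + \<i> * of_real l \<noteq> 0" "\<i> * of_real l - z \<noteq> 0"
    using assms by (auto simp: complex_eq_iff)
  then show ?thesis by (simp add: blaschke_factor_def)
qed

lemma blaschke_weight_ge_small: "0 \<le> (l::real) \<Longrightarrow> l \<le> 1 \<Longrightarrow> l \<le> 4 * (l / (l + 1)\<^sup>2)"
  using mult_left_mono[of "(l + 1)\<^sup>2" 4 l] power_mono[of "l + 1" 2 2] by (simp add: field_simps)

lemma blaschke_weight_ge_large: "1 \<le> (l::real) \<Longrightarrow> 1 / l \<le> 4 * (l / (l + 1)\<^sup>2)"
  using power_mono[of "l + 1" "2 * l" 2] by (simp add: field_simps power2_eq_square)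

lemma norm_blaschke_factor_minus_1:
  assumes z: "Im z > 0" and l: "l \<ge> 0"
  shows "norm (blaschke_factor l z - 1) \<le> 8 * (1 / Im z + norm z) * (l / (l + 1)\<^sup>2)"
proof -
  define w where "w = z + \<i> * of_real l"
  have w: "w \<noteq> 0" "Im z + l \<le> norm w"
    using add_ii_nonzero[OF assms] Im_le_norm_add_ii[OF assms] by (auto simp: w_def)
  have combine: "2 * A * B \<le> 8 * (1 / Im z + norm z) * (l / (l + 1)\<^sup>2)"
    if "0 \<le> A" "A \<le> 1 / Im z + norm z" "0 \<le> B" "B \<le> 4 * (l / (l + 1)\<^sup>2)" for A B
  proof -
    have "0 \<le> 1 / Im z + norm z" using z by simp
    from mult_mono[OF that(2,4) this that(3)] show ?thesis by linarith
  qed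
  show ?thesis
  proof (cases "l \<le> 1")
    case True
    have "blaschke_factor l z - 1 = - 2 * \<i> * of_real l / w"
      using True w by (simp add: blaschke_factor_def w_def field_simps)
    then have "norm (blaschke_factor l z - 1) = 2 * l / norm w"
      using l by (simp add: norm_divide norm_mult)
    also have "\<dots> \<le> 2 * (1 / Im z) * l"
      using w z l by (simp add: frac_le)
    also have "\<dots> \<le> 8 * (1 / Im z + norm z) * (l / (l + 1)\<^sup>2)"
      using True l z by (intro combine blaschke_weight_ge_small) auto
    finally show ?thesis .
  next
    case False
    have "blaschke_factor l z - 1 = - 2 * z / w"
      using False w by (simp add: blaschke_factor_def w_def field_simps)
    then have "norm (blaschke_factor l z - 1) = 2 * norm z / norm w"
      by (simp add: norm_divide norm_mult)
    also have "\<dots> \<le> 2 * norm z * (1 / l)"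
      using w z False by (simp add: frac_le)
    also have "\<dots> \<le> 8 * (1 / Im z + norm z) * (l / (l + 1)\<^sup>2)"
      using False z by (intro combine blaschke_weight_ge_large) auto
    finally show ?thesis .
  qed
qed

lemma blaschke_factor_holomorphic:
  "l \<ge> 0 \<Longrightarrow> blaschke_factor l holomorphic_on {z. Im z > 0}"
  unfolding blaschke_factor_def using add_ii_nonzero[of _ l]
  by (cases "l \<le> 1") (auto intro!: holomorphic_intros)

definition blaschke_product :: "(nat \<Rightarrow> real) \<Rightarrow> complex \<Rightarrow> complex" where
  "blaschke_product a z = (\<Prod>n. blaschke_factor (a n) z)"

locale blaschke_sequence =
  fixes a :: "nat \<Rightarrow> real"
  assumes nonneg: "\<And>n. a n \<ge> 0"
    and summable: "summable (\<lambda>n. a n / (a n + 1)\<^sup>2)"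
begin

lemma has_prod_blaschke_product:
  assumes "Im z > 0"
  shows "(\<lambda>n. blaschke_factor (a n) z) has_prod blaschke_product a z"
proof -
  have "convergent_prod (\<lambda>n. blaschke_factor (a n) z)"
  proof (rule convergent_prod_of_summable_bound)
    show "summable (\<lambda>n. 8 * (1 / Im z + norm z) * (a n / (a n + 1)\<^sup>2))"
      using summable by (rule summable_mult)
    show "norm (blaschke_factor (a n) z - 1) \<le> 8 * (1 / Im z + norm z) * (a n / (a n + 1)\<^sup>2)" for n
      using assms nonneg by (rule norm_blaschke_factor_minus_1)
  qed
  then show ?thesis unfolding blaschke_product_def by (rule convergent_prod_has_prod)
qed

lemma blaschke_product_holomorphic: "blaschke_product a holomorphic_on {z. Im z > 0}"
  unfolding blaschke_product_def[abs_def]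
proof (rule holomorphic_on_prodinf[where c = "\<lambda>z. 8 * (1 / Im z + norm z)"
      and W = "\<lambda>n. a n / (a n + 1)\<^sup>2"])
  show "open {z. Im z > 0}" by (rule open_halfspace_Im_gt)
  show "blaschke_factor (a n) holomorphic_on {z. Im z > 0}" for n
    using nonneg by (rule blaschke_factor_holomorphic)
  show "continuous_on {z. Im z > 0} (\<lambda>z. 8 * (1 / Im z + norm z))"
    by (intro continuous_intros) auto
  show "summable (\<lambda>n. a n / (a n + 1)\<^sup>2)" by (rule summable)
  show "a n / (a n + 1)\<^sup>2 \<ge> 0" for n using nonneg[of n] by simp
  show "norm (blaschke_factor (a n) z - 1) \<le> 8 * (1 / Im z + norm z) * (a n / (a n + 1)\<^sup>2)"
    if "z \<in> {z. Im z > 0}" for n z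
    by (rule norm_blaschke_factor_minus_1) (use that nonneg in auto)
qed

lemma norm_blaschke_product_le_1:
  assumes "Im z > 0"
  shows "norm (blaschke_product a z) \<le> 1"
proof (rule Lim_norm_ubound[OF _ has_prod_imp_tendsto'[OF has_prod_blaschke_product[OF assms]]])
  show "\<forall>\<^sub>F M in sequentially. norm (\<Prod>n<M. blaschke_factor (a n) z) \<le> 1"
  proof (intro always_eventually allI)
    fix M
    have "norm (\<Prod>n<M. blaschke_factor (a n) z) = (\<Prod>n<M. norm (blaschke_factor (a n) z))"
      by (simp add: prod_norm)
    also have "\<dots> \<le> 1"
      using norm_blaschke_factor_le_1[OF assms nonneg] by (intro prod_le_1) auto
    finally show "norm (\<Prod>n<M. blaschke_factor (a n) z) \<le> 1" .
  qed
qed simp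

lemma blaschke_product_eq_0_iff:
  assumes "Im z > 0"
  shows "blaschke_product a z = 0 \<longleftrightarrow> (\<exists>n. blaschke_factor (a n) z = 0)"
  unfolding has_prod_eq_0_iff[OF has_prod_blaschke_product[OF assms]] by (auto simp: image_iff)

end

lemma countable_summable_on_enumeration:
  fixes w :: "'a \<Rightarrow> real"
  assumes "countable N" "w summable_on N" "\<And>x. x \<in> N \<Longrightarrow> w x \<ge> 0" "w d = 0"
  obtains e :: "nat \<Rightarrow> 'a" where "range e \<subseteq> insert d N" "N \<subseteq> range e" "summable (\<lambda>n. w (e n))"
proof -
  obtain g :: "'a \<Rightarrow> nat" where g: "inj_on g N" using assms(1) countable_def by blast
  define e where "e n = (if n \<in> g ` N then inv_into N g n else d)" for n
  have "bij_betw (inv_into N g) (g ` N) N"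
    by (rule bij_betw_inv_into[OF inj_on_imp_bij_betw[OF g]])
  then have "(\<lambda>n. w (inv_into N g n)) summable_on g ` N"
    using summable_on_reindex_bij_betw assms(2) by blast
  moreover have "(\<lambda>n. w (e n)) summable_on UNIV \<longleftrightarrow> (\<lambda>n. w (inv_into N g n)) summable_on g ` N"
    by (rule summable_on_cong_neutral) (auto simp: e_def assms(4))
  ultimately have "(\<lambda>n. w (e n)) summable_on UNIV" by blast
  moreover have "w (e n) \<ge> 0" for n
  proof (cases "n \<in> g ` N")
    case True
    show ?thesis unfolding e_def if_P[OF True] by (rule assms(3)[OF inv_into_into[OF True]])
  next
    case False
    then show ?thesis using assms(4) by (simp add: e_def)
  qed
  ultimately have summable: "summable (\<lambda>n. w (e n))"
    using summable_on_UNIV_nonneg_real_iff by metis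
  have "range e \<subseteq> insert d N" by (auto simp: e_def inv_into_into)
  moreover have "N \<subseteq> range e"
  proof
    fix x assume "x \<in> N"
    then have "e (g x) = x" using g by (simp add: e_def)
    then show "x \<in> range e" by (metis rangeI)
  qed
  ultimately show thesis using summable by (rule that)
qed

lemma blaschke_product_vanishing_on_imaginary_axis:
  assumes "countable N" "N \<subseteq> {0<..}" "(\<lambda>l. l / (l + 1)\<^sup>2) summable_on N"
  obtains B where "B holomorphic_on {z. Im z > 0}" "\<And>z. Im z > 0 \<Longrightarrow> norm (B z) \<le> 1"
    "\<And>l. l \<in> N \<Longrightarrow> B (Complex 0 l) = 0" "\<And>z. Im z > 0 \<Longrightarrow> Re z \<noteq> 0 \<Longrightarrow> B z \<noteq> 0"
proof -
  have w_nonneg: "l / (l + 1)\<^sup>2 \<ge> 0" if "l \<in> N" for l :: real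
  proof -
    have "l > 0" using that assms(2) by auto
    then show ?thesis by simp
  qed
  obtain a where a: "range a \<subseteq> insert 0 N" "N \<subseteq> range a"
    "summable (\<lambda>n. a n / (a n + 1)\<^sup>2)"
    by (rule countable_summable_on_enumeration[OF assms(1,3) w_nonneg, where d = 0]) simp_all
  have "a n \<ge> 0" for n
  proof -
    have "a n \<in> insert 0 N" using a(1) by blast
    then show ?thesis using assms(2) by auto
  qed
  then interpret blaschke_sequence a
    using a(3) by unfold_locales
  show thesis
  proof (rule that[of "blaschke_product a"])
    show "blaschke_product a holomorphic_on {z. Im z > 0}"
      by (rule blaschke_product_holomorphic)
    show "norm (blaschke_product a z) \<le> 1" if "Im z > 0" for z
      using that by (rule norm_blaschke_product_le_1)
    show "blaschke_product a (Complex 0 l) = 0" if l: "l \<in> N" for l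
    proof -
      obtain n where "a n = l" using a(2) l by blast
      moreover have "l > 0" using assms(2) l by auto
      ultimately show ?thesis
        by (subst blaschke_product_eq_0_iff) (auto intro: blaschke_factor_imaginary_axis)
    qed
    show "blaschke_product a z \<noteq> 0" if "Im z > 0" "Re z \<noteq> 0" for z
      using that by (simp add: blaschke_product_eq_0_iff blaschke_factor_nonzero)
  qed
qed

section \<open>The scalar measures of a positive operator valued measure\<close>

definition scalar_measure :: "(real set \<Rightarrow> 'a::complex_inner \<Rightarrow> 'a) \<Rightarrow> 'a \<Rightarrow> real set \<Rightarrow> real" where
  "scalar_measure \<mu> v A = Re (cinner v (\<mu> A v))"

context
  fixes \<mu> :: "real set \<Rightarrow> 'a::complex_inner \<Rightarrow> 'a"
  assumes pos: "pos_op_measure \<mu>"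
begin

lemma cinner_pos_op_measure_self:
  assumes "A \<in> sets borel" "A \<subseteq> {0<..}"
  shows "cinner v (\<mu> A v) = of_real (scalar_measure \<mu> v A)"
  using pos assms unfolding pos_op_measure_def positive_op_def scalar_measure_def
  by (metis Reals_cases Re_complex_of_real)

lemma scalar_measure_nonneg:
  "A \<in> sets borel \<Longrightarrow> A \<subseteq> {0<..} \<Longrightarrow> scalar_measure \<mu> v A \<ge> 0"
  using pos unfolding pos_op_measure_def positive_op_def scalar_measure_def by blast

lemma scalar_measure_Un:
  assumes "A \<in> sets borel" "A \<subseteq> {0<..}" "B \<in> sets borel" "B \<subseteq> {0<..}" "A \<inter> B = {}"
  shows "scalar_measure \<mu> v (A \<union> B) = scalar_measure \<mu> v A + scalar_measure \<mu> v B"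
proof -
  define S where "S n = (if n = 0 then A else if n = 1 then B else {})" for n :: nat
  have "\<forall>n. S n \<in> sets borel \<and> S n \<subseteq> {0<..}" using assms by (auto simp: S_def)
  moreover have "disjoint_family S" using assms(5) by (auto simp: disjoint_family_on_def S_def)
  ultimately have "(\<lambda>n. cinner v (\<mu> (S n) v)) sums cinner v (\<mu> (\<Union>n. S n) v)"
    using pos unfolding pos_op_measure_def by blast
  moreover have "(\<Union>n. S n) = A \<union> B" by (auto simp: S_def split: if_splits)
  moreover have "(\<lambda>n. cinner v (\<mu> (S n) v)) sums (\<Sum>n\<in>{0, 1}. cinner v (\<mu> (S n) v))"
  proof (rule sums_finite)
    have "\<mu> {} v = 0" using pos by (simp add: pos_op_measure_def)
    then show "cinner v (\<mu> (S n) v) = 0" if "n \<notin> {0, 1}" for n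
      using that by (simp add: S_def)
  qed simp
  ultimately have "cinner v (\<mu> (A \<union> B) v) = (\<Sum>n\<in>{0, 1}. cinner v (\<mu> (S n) v))"
    using sums_unique2 by metis
  also have "\<dots> = cinner v (\<mu> A v) + cinner v (\<mu> B v)" by (simp add: S_def)
  finally show ?thesis by (simp add: scalar_measure_def)
qed

lemma scalar_measure_mono:
  assumes "A \<subseteq> B" "A \<in> sets borel" "B \<in> sets borel" "B \<subseteq> {0<..}"
  shows "scalar_measure \<mu> v A \<le> scalar_measure \<mu> v B"
proof -
  have "scalar_measure \<mu> v B = scalar_measure \<mu> v A + scalar_measure \<mu> v (B - A)"
  proof -
    have "B - A \<in> sets borel" "B - A \<subseteq> {0<..}" "A \<subseteq> {0<..}" using assms by auto
    moreover have "A \<union> (B - A) = B" using assms(1) by blast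
    ultimately show ?thesis using assms(2) scalar_measure_Un[of A "B - A" v] by simp
  qed
  then show ?thesis using scalar_measure_nonneg[of "B - A" v] assms by auto
qed

lemma scalar_measure_eq_0_subset:
  assumes "scalar_measure \<mu> v X \<le> 0" "A \<subseteq> X"
    "A \<in> sets borel" "X \<in> sets borel" "X \<subseteq> {0<..}"
  shows "scalar_measure \<mu> v A = 0"
proof -
  have "A \<subseteq> {0<..}" using assms(2,5) by blast
  then show ?thesis
    using scalar_measure_mono[OF assms(2-5), of v] scalar_measure_nonneg[of A v] assms(1,3) by linarith
qed

lemma scalar_measure_partition:
  fixes s :: "nat \<Rightarrow> real"
  assumes "\<And>k. k < n \<Longrightarrow> s k < s (Suc k)" "s 0 \<ge> 0"
  shows "scalar_measure \<mu> v {s 0<..s n} = (\<Sum>k<n. scalar_measure \<mu> v {s k<..s (Suc k)})"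
  using assms
proof (induction n)
  case 0
  have "\<mu> {} v = 0" using pos by (simp add: pos_op_measure_def)
  then show ?case by (simp add: scalar_measure_def)
next
  case (Suc n)
  have "s 0 \<le> s n"
  proof (rule lift_Suc_mono_le_ivl[of "{..<n}"])
    show "s m \<le> s (Suc m)" if "m \<in> {..<n}" for m
      using Suc.prems(1)[of m] that by simp
  qed auto
  then have "{s 0<..s (Suc n)} = {s 0<..s n} \<union> {s n<..s (Suc n)}"
    using Suc.prems(1)[of n] by auto
  moreover have "scalar_measure \<mu> v ({s 0<..s n} \<union> {s n<..s (Suc n)}) =
      scalar_measure \<mu> v {s 0<..s n} + scalar_measure \<mu> v {s n<..s (Suc n)}"
    using \<open>s 0 \<le> s n\<close> Suc.prems(2) by (intro scalar_measure_Un) auto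
  ultimately show ?case using Suc by simp
qed

lemma pos_op_measure_cscale:
  assumes "A \<in> sets borel" "A \<subseteq> {0<..}"
  shows "\<mu> A (cscale c x) = cscale c (\<mu> A x)"
proof -
  have "bounded_clinear_op (\<mu> A)" using pos assms unfolding pos_op_measure_def by blast
  then show ?thesis by (simp add: bounded_clinear_op_def)
qed

lemma rs_sum_cscale_self:
  assumes "\<And>k. k < n \<Longrightarrow> s k \<ge> 0"
  shows "rs_sum \<mu> (\<lambda>t. cscale (\<phi> t) v) (\<lambda>t. cscale (\<phi> t) v) s t n =
    of_real (\<Sum>k<n. (cmod (\<phi> (t k)))\<^sup>2 * scalar_measure \<mu> v {s k<..s (Suc k)})"
proof -
  have "cinner (cscale c v) (\<mu> {s k<..s (Suc k)} (cscale c v)) =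
      of_real ((cmod c)\<^sup>2 * scalar_measure \<mu> v {s k<..s (Suc k)})" if "k < n" for c k
  proof -
    have I: "{s k<..s (Suc k)} \<in> sets borel" "{s k<..s (Suc k)} \<subseteq> {0<..}"
      using assms[OF that] by auto
    show ?thesis
      by (simp add: pos_op_measure_cscale[OF I] cinner_cscale_self cinner_pos_op_measure_self[OF I])
  qed
  then have "rs_sum \<mu> (\<lambda>t. cscale (\<phi> t) v) (\<lambda>t. cscale (\<phi> t) v) s t n =
      (\<Sum>k<n. of_real ((cmod (\<phi> (t k)))\<^sup>2 * scalar_measure \<mu> v {s k<..s (Suc k)}))"
    unfolding rs_sum_def by (intro sum.cong) simp_all
  then show ?thesis by (simp only: of_real_sum)
qed

end

section \<open>Riemann--Stieltjes integrals against the measure\<close>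

definition fine_partition :: "real \<Rightarrow> real \<Rightarrow> real \<Rightarrow> (nat \<Rightarrow> real) \<Rightarrow> (nat \<Rightarrow> real) \<Rightarrow> nat \<Rightarrow> bool" where
  "fine_partition \<delta> a b s t n \<longleftrightarrow> s 0 = a \<and> s n = b \<and>
     (\<forall>k<n. s k < s (Suc k) \<and> s (Suc k) - s k < \<delta> \<and> t k \<in> {s k..s (Suc k)})"

lemma has_op_int_on_iff_fine_partition:
  "has_op_int_on \<mu> f g a b I \<longleftrightarrow>
     (\<forall>\<epsilon>>0. \<exists>\<delta>>0. \<forall>n s t. fine_partition \<delta> a b s t n \<longrightarrow> cmod (rs_sum \<mu> f g s t n - I) < \<epsilon>)"
  by (simp add: has_op_int_on_def fine_partition_def)

lemma fine_partition_mono: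
  assumes "fine_partition \<delta> a b s t n" "i \<le> j" "j \<le> n"
  shows "s i \<le> s j"
proof (rule lift_Suc_mono_le_ivl[of "{..<n}"])
  show "s k \<le> s (Suc k)" if "k \<in> {..<n}" for k
    using assms(1) that by (simp add: fine_partition_def less_imp_le)
qed (use assms in auto)

lemma fine_partition_exists:
  assumes "\<delta> > 0" "a < b"
  obtains n s t where "fine_partition \<delta> a b s t n"
proof -
  obtain n :: nat where n: "(b - a) / \<delta> < real n" using reals_Archimedean2 by blast
  then have "n > 0" using assms by (cases n) (auto simp: field_simps)
  define h where "h = (b - a) / real n"
  have "h > 0" "h < \<delta>" "real n * h = b - a"
    using n \<open>n > 0\<close> assms by (auto simp: h_def field_simps)
  then have "fine_partition \<delta> a b (\<lambda>k. a + real k * h) (\<lambda>k. a + real k * h) n"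
    by (auto simp: fine_partition_def algebra_simps)
  then show thesis by (rule that)
qed

lemma has_op_int_on_unique:
  assumes "has_op_int_on \<mu> f g a b I" "has_op_int_on \<mu> f g a b J" "a < b"
  shows "I = J"
proof (rule ccontr)
  assume "I \<noteq> J"
  then have \<epsilon>: "cmod (I - J) / 2 > 0" by simp
  obtain \<delta>1 where "\<delta>1 > 0" and \<delta>1: "\<And>n s t. fine_partition \<delta>1 a b s t n \<Longrightarrow>
      cmod (rs_sum \<mu> f g s t n - I) < cmod (I - J) / 2"
    using assms(1) \<epsilon> unfolding has_op_int_on_iff_fine_partition by blast
  obtain \<delta>2 where "\<delta>2 > 0" and \<delta>2: "\<And>n s t. fine_partition \<delta>2 a b s t n \<Longrightarrow>
      cmod (rs_sum \<mu> f g s t n - J) < cmod (I - J) / 2"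
    using assms(2) \<epsilon> unfolding has_op_int_on_iff_fine_partition by blast
  have "min \<delta>1 \<delta>2 > 0" using \<open>\<delta>1 > 0\<close> \<open>\<delta>2 > 0\<close> by simp
  then obtain n s t where "fine_partition (min \<delta>1 \<delta>2) a b s t n"
    using fine_partition_exists assms(3) by blast
  then have "fine_partition \<delta>1 a b s t n" "fine_partition \<delta>2 a b s t n"
    by (auto simp: fine_partition_def)
  then have "cmod (rs_sum \<mu> f g s t n - I) < cmod (I - J) / 2"
    "cmod (rs_sum \<mu> f g s t n - J) < cmod (I - J) / 2"
    using \<delta>1 \<delta>2 by blast+
  moreover have "cmod (I - J) \<le> cmod (rs_sum \<mu> f g s t n - I) + cmod (rs_sum \<mu> f g s t n - J)"
    using norm_triangle_ineq4[of "rs_sum \<mu> f g s t n - J" "rs_sum \<mu> f g s t n - I"]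
    by (simp add: norm_minus_commute)
  ultimately show False by linarith
qed

lemma op_int_on_eq: "has_op_int_on \<mu> f g a b I \<Longrightarrow> a < b \<Longrightarrow> op_int_on \<mu> f g a b = I"
  unfolding op_int_on_def using has_op_int_on_unique by blast

lemma op_int_eq_0:
  assumes "\<And>a b. 0 < a \<Longrightarrow> a < b \<Longrightarrow> has_op_int_on \<mu> f g a b 0"
  shows "op_int \<mu> f g = 0"
proof -
  have "\<forall>\<^sub>F p in at_right (0::real) \<times>\<^sub>F at_top. (case p of (a, b) \<Rightarrow> op_int_on \<mu> f g a b) = 0"
    unfolding eventually_prod_filter
  proof (intro exI conjI allI impI)
    show "\<forall>\<^sub>F a in at_right 0. 0 < a \<and> a < (1::real)"
      unfolding eventually_at_right_field by (intro exI[of _ 1]) auto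
    show "\<forall>\<^sub>F b in at_top. b > (1::real)" by (rule eventually_gt_at_top)
    fix a b :: real
    assume "0 < a \<and> a < 1" "b > 1"
    then show "(case (a, b) of (a, b) \<Rightarrow> op_int_on \<mu> f g a b) = 0"
      using op_int_on_eq[OF assms] by simp
  qed
  then have lim0: "((\<lambda>(a, b). op_int_on \<mu> f g a b) \<longlongrightarrow> 0) (at_right 0 \<times>\<^sub>F at_top)"
    by (simp add: tendsto_eventually case_prod_unfold)
  then have "has_op_int \<mu> f g 0"
    using assms unfolding has_op_int_def by blast
  moreover have "L = 0" if "has_op_int \<mu> f g L" for L
  proof (rule tendsto_unique)
    show "\<not> trivial_limit (at_right (0::real) \<times>\<^sub>F (at_top :: real filter))"
      using trivial_limit_at_right_real[of 0] trivial_limit_at_top_linorder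
      by (simp add: eventually_False prod_filter_eq_bot)
  qed (use that lim0 in \<open>auto simp: has_op_int_def\<close>)
  ultimately show ?thesis unfolding op_int_def by (rule the_equality)
qed

context
  fixes \<mu> :: "real set \<Rightarrow> 'a::complex_inner \<Rightarrow> 'a"
  assumes pos: "pos_op_measure \<mu>"
begin

lemma norm_rs_sum_cscale_self_le:
  fixes \<phi> :: "real \<Rightarrow> complex"
  assumes P: "fine_partition \<delta> a b s t n" and "a \<ge> 0"
    and null: "scalar_measure \<mu> v ({0<..} - N) \<le> 0" and N: "N \<in> sets borel"
    and small: "\<And>k l. k < n \<Longrightarrow> l \<in> N \<Longrightarrow> l \<in> {s k<..s (Suc k)} \<Longrightarrow> (cmod (\<phi> (t k)))\<^sup>2 \<le> e"
  shows "cmod (rs_sum \<mu> (\<lambda>t. cscale (\<phi> t) v) (\<lambda>t. cscale (\<phi> t) v) s t n)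
    \<le> e * scalar_measure \<mu> v {a<..b}"
proof -
  have s_nonneg: "s k \<ge> 0" if "k \<le> n" for k
    using fine_partition_mono[OF P, of 0 k] that P \<open>a \<ge> 0\<close> by (auto simp: fine_partition_def)
  have I: "{s k<..s (Suc k)} \<in> sets borel" "{s k<..s (Suc k)} \<subseteq> {0<..}" if "k < n" for k
    using s_nonneg[of k] that by auto
  have bound: "(cmod (\<phi> (t k)))\<^sup>2 * scalar_measure \<mu> v {s k<..s (Suc k)}
      \<le> e * scalar_measure \<mu> v {s k<..s (Suc k)}" if k: "k < n" for k
  proof (cases "{s k<..s (Suc k)} \<inter> N = {}")
    case True
    then have "scalar_measure \<mu> v {s k<..s (Suc k)} = 0"
      using I[OF k] N by (intro scalar_measure_eq_0_subset[OF pos null]) auto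
    then show ?thesis by simp
  next
    case False
    then obtain l where "l \<in> N" "l \<in> {s k<..s (Suc k)}" by blast
    then show ?thesis
      using small[OF k] scalar_measure_nonneg[OF pos I[OF k]] by (intro mult_right_mono) auto
  qed
  have "rs_sum \<mu> (\<lambda>t. cscale (\<phi> t) v) (\<lambda>t. cscale (\<phi> t) v) s t n =
      of_real (\<Sum>k<n. (cmod (\<phi> (t k)))\<^sup>2 * scalar_measure \<mu> v {s k<..s (Suc k)})"
    using s_nonneg by (intro rs_sum_cscale_self[OF pos]) auto
  moreover have "(\<Sum>k<n. (cmod (\<phi> (t k)))\<^sup>2 * scalar_measure \<mu> v {s k<..s (Suc k)}) \<ge> 0"
    using I scalar_measure_nonneg[OF pos] by (intro sum_nonneg mult_nonneg_nonneg) auto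
  ultimately have "cmod (rs_sum \<mu> (\<lambda>t. cscale (\<phi> t) v) (\<lambda>t. cscale (\<phi> t) v) s t n) =
      (\<Sum>k<n. (cmod (\<phi> (t k)))\<^sup>2 * scalar_measure \<mu> v {s k<..s (Suc k)})"
    by (simp only: norm_of_real abs_of_nonneg)
  also have "\<dots> \<le> (\<Sum>k<n. e * scalar_measure \<mu> v {s k<..s (Suc k)})"
    using bound by (intro sum_mono) auto
  also have "\<dots> = e * scalar_measure \<mu> v {a<..b}"
    using P \<open>a \<ge> 0\<close> scalar_measure_partition[OF pos, of n s v]
    by (simp add: fine_partition_def sum_distrib_left)
  finally show ?thesis .
qed

lemma has_op_int_on_cscale_self_eq_0:
  fixes \<phi> :: "real \<Rightarrow> complex"
  assumes null: "scalar_measure \<mu> v ({0<..} - N) \<le> 0" and N: "N \<in> sets borel"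
    and \<phi>: "continuous_on {a..b} \<phi>" "\<And>l. l \<in> N \<Longrightarrow> \<phi> l = 0" and ab: "0 < a" "a < b"
  shows "has_op_int_on \<mu> (\<lambda>t. cscale (\<phi> t) v) (\<lambda>t. cscale (\<phi> t) v) a b 0"
  unfolding has_op_int_on_iff_fine_partition
proof (intro allI impI)
  fix \<epsilon> :: real
  assume "\<epsilon> > 0"
  define M where "M = scalar_measure \<mu> v {a<..b}"
  have "M \<ge> 0" unfolding M_def using ab by (intro scalar_measure_nonneg[OF pos]) auto
  then have e: "\<epsilon> / (M + 1) > 0" using \<open>\<epsilon> > 0\<close> by simp
  have "uniformly_continuous_on {a..b} (\<lambda>t. (cmod (\<phi> t))\<^sup>2)"
    by (intro compact_uniformly_continuous continuous_intros \<phi>(1) compact_Icc)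
  then obtain \<delta> where "\<delta> > 0" and \<delta>: "\<And>x x'. x \<in> {a..b} \<Longrightarrow> x' \<in> {a..b} \<Longrightarrow> dist x' x < \<delta> \<Longrightarrow>
      dist ((cmod (\<phi> x'))\<^sup>2) ((cmod (\<phi> x))\<^sup>2) < \<epsilon> / (M + 1)"
    using e unfolding uniformly_continuous_on_def by metis
  have "cmod (rs_sum \<mu> (\<lambda>t. cscale (\<phi> t) v) (\<lambda>t. cscale (\<phi> t) v) s t n - 0) < \<epsilon>"
    if P: "fine_partition \<delta> a b s t n" for n s t
  proof -
    have "(cmod (\<phi> (t k)))\<^sup>2 \<le> \<epsilon> / (M + 1)"
      if k: "k < n" and l: "l \<in> N" "l \<in> {s k<..s (Suc k)}" for k l
    proof -
      have "a \<le> s k" "s (Suc k) \<le> b"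
        using fine_partition_mono[OF P, of 0 k] fine_partition_mono[OF P, of "Suc k" n] k P
        by (auto simp: fine_partition_def)
      moreover have "t k \<in> {s k..s (Suc k)}" "s (Suc k) - s k < \<delta>"
        using P k by (auto simp: fine_partition_def)
      ultimately have "dist ((cmod (\<phi> (t k)))\<^sup>2) ((cmod (\<phi> l))\<^sup>2) < \<epsilon> / (M + 1)"
        using l by (intro \<delta>) (auto simp: dist_real_def)
      then show ?thesis using \<phi>(2)[OF l(1)] by (simp add: dist_real_def)
    qed
    then have "cmod (rs_sum \<mu> (\<lambda>t. cscale (\<phi> t) v) (\<lambda>t. cscale (\<phi> t) v) s t n) \<le> \<epsilon> / (M + 1) * M"
      unfolding M_def using ab by (intro norm_rs_sum_cscale_self_le[OF P _ null N]) auto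
    also have "\<dots> < \<epsilon>" using \<open>M \<ge> 0\<close> \<open>\<epsilon> > 0\<close> by (simp add: field_simps)
    finally show ?thesis by simp
  qed
  then show "\<exists>\<delta>>0. \<forall>n s t. fine_partition \<delta> a b s t n \<longrightarrow>
      cmod (rs_sum \<mu> (\<lambda>t. cscale (\<phi> t) v) (\<lambda>t. cscale (\<phi> t) v) s t n - 0) < \<epsilon>"
    using \<open>\<delta> > 0\<close> by blast
qed

lemma op_int_cscale_self_eq_0:
  fixes \<phi> :: "real \<Rightarrow> complex"
  assumes "scalar_measure \<mu> v ({0<..} - N) \<le> 0" "N \<in> sets borel"
    and "continuous_on {0<..} \<phi>" "\<And>l. l \<in> N \<Longrightarrow> \<phi> l = 0"
  shows "op_int \<mu> (\<lambda>t. cscale (\<phi> t) v) (\<lambda>t. cscale (\<phi> t) v) = 0"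
proof (rule op_int_eq_0)
  fix a b :: real
  assume "0 < a" "a < b"
  have "continuous_on {a..b} \<phi>" using assms(3) by (rule continuous_on_subset) (use \<open>0 < a\<close> in auto)
  then show "has_op_int_on \<mu> (\<lambda>t. cscale (\<phi> t) v) (\<lambda>t. cscale (\<phi> t) v) a b 0"
    by (rule has_op_int_on_cscale_self_eq_0[OF assms(1,2) _ assms(4) \<open>0 < a\<close> \<open>a < b\<close>])
qed

lemma exists_scalar_measure_le_0:
  assumes "\<not> strictly_positive_op (\<mu> A)" "A \<in> sets borel" "A \<subseteq> {0<..}"
  obtains v where "v \<noteq> 0" "scalar_measure \<mu> v A \<le> 0"
proof -
  obtain v where "v \<noteq> 0" "\<not> (cinner v (\<mu> A v) \<in> \<real> \<and> Re (cinner v (\<mu> A v)) > 0)"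
    using assms(1) unfolding strictly_positive_op_def by blast
  moreover have "cinner v (\<mu> A v) \<in> \<real>"
    using cinner_pos_op_measure_self[OF pos assms(2,3)] by simp
  ultimately show thesis using that by (auto simp: scalar_measure_def)
qed

end

section \<open>The Hardy space test function\<close>

lemma continuous_on_imaginary_axis:
  assumes "f holomorphic_on {z. Im z > 0}"
  shows "continuous_on {0<..} (\<lambda>t. f (Complex 0 t))"
proof -
  have "(\<lambda>t. Complex 0 t) = (\<lambda>t. \<i> * complex_of_real t)" by (simp add: fun_eq_iff complex_eq_iff)
  then show ?thesis
    by (auto intro!: continuous_on_compose2[OF holomorphic_on_imp_continuous_on[OF assms]]
        continuous_intros)
qed

lemma holomorphic_on_div_add_ii:
  assumes "B holomorphic_on {z. Im z > 0}"
  shows "(\<lambda>z. B z / (z + \<i>)) holomorphic_on {z. Im z > 0}"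
proof -
  have "z + \<i> \<noteq> 0" if "Im z > 0" for z using add_ii_nonzero[OF that, of 1] by simp
  then show ?thesis using assms by (auto intro!: holomorphic_intros)
qed

lemma cscale_div_add_ii_in_hardy2:
  assumes B: "B holomorphic_on {z. Im z > 0}" "\<And>z. Im z > 0 \<Longrightarrow> norm (B z) \<le> 1"
  shows "(\<lambda>z. cscale (B z / (z + \<i>)) v) \<in> hardy2"
  unfolding hardy2_def
proof (intro CollectI conjI allI impI)
  show "\<exists>f'. ((\<lambda>z. cscale (B z / (z + \<i>)) v) has_derivative (\<lambda>h. cscale h f')) (at z)"
    if "Im z > 0" for z
    using holomorphic_on_div_add_ii[OF B(1)] that
    by (intro has_derivative_cscale_holomorphic) (auto simp: open_halfspace_Im_gt)
next
  define K where "K = (\<integral>\<^sup>+ x. ennreal ((norm v)\<^sup>2 * inverse (1 + x\<^sup>2)) \<partial>lborel)"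
  have "integrable lborel (\<lambda>x::real. (norm v)\<^sup>2 * inverse (1 + x\<^sup>2))"
    using integrable_inverse_1_plus_square
    by (intro integrable_mult_right) (simp add: set_integrable_def einterval_def)
  then have "(\<integral>\<^sup>+ x. ennreal (norm ((norm v)\<^sup>2 * inverse (1 + x\<^sup>2))) \<partial>lborel) < \<infinity>"
    by (rule integrable_iff_bounded[THEN iffD1, THEN conjunct2])
  moreover have "norm ((norm v)\<^sup>2 * inverse (1 + x\<^sup>2)) = (norm v)\<^sup>2 * inverse (1 + x\<^sup>2)" for x :: real
    by (simp add: abs_mult)
  ultimately have "K < \<infinity>" by (simp only: K_def)
  moreover have "(\<integral>\<^sup>+ x. ennreal ((norm (cscale (B (Complex x y) / (Complex x y + \<i>)) v))\<^sup>2) \<partial>lborel) \<le> K"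
    if "y \<in> {0<..}" for y
    unfolding K_def
  proof (rule nn_integral_mono)
    fix x :: real
    have "(cmod (Complex x y + \<i>))\<^sup>2 = x\<^sup>2 + (y + 1)\<^sup>2" by (simp add: cmod_power2)
    moreover have "(y + 1)\<^sup>2 \<ge> 1" using that by (intro one_le_power) auto
    ultimately have "1 + x\<^sup>2 \<le> (cmod (Complex x y + \<i>))\<^sup>2" by simp
    moreover have "(cmod (B (Complex x y)))\<^sup>2 \<le> 1"
      using B(2)[of "Complex x y"] that by (simp add: power_le_one)
    ultimately have "(cmod (B (Complex x y) / (Complex x y + \<i>)))\<^sup>2 \<le> inverse (1 + x\<^sup>2)"
      by (simp add: norm_divide power_divide inverse_eq_divide frac_le add_pos_nonneg)
    then show "ennreal ((norm (cscale (B (Complex x y) / (Complex x y + \<i>)) v))\<^sup>2)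
        \<le> ennreal ((norm v)\<^sup>2 * inverse (1 + x\<^sup>2))"
      by (intro ennreal_leI) (simp add: norm_cscale power_mult_distrib mult.commute mult_left_mono)
  qed
  ultimately show "(SUP y\<in>{0<..}. \<integral>\<^sup>+ x. ennreal ((norm (cscale (B (Complex x y) / (Complex x y + \<i>)) v))\<^sup>2) \<partial>lborel) < \<infinity>"
    by (meson SUP_least le_less_trans)
qed

theorem propositionA3:
  fixes \<mu> :: "real set \<Rightarrow> 'k::{complex_inner, complete_space} \<Rightarrow> 'k"
    and N :: "real set"
  assumes "K_carleson \<mu>"
    and "countable N" and "N \<subseteq> {0<..}"
    and "(\<lambda>l. l / (l + 1)\<^sup>2) summable_on N"
    and "\<not> strictly_positive_op (\<mu> ({0<..} - N))"
  shows "\<not> H_mu_strictly_positive \<mu>"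
proof
  assume H: "H_mu_strictly_positive \<mu>"
  have pos: "pos_op_measure \<mu>" using assms(1) by (simp add: K_carleson_def)
  have N: "N \<in> sets borel"
    using null_setsD2[OF countable_imp_null_set_lborel[OF assms(2)]] by simp
  have "{0<..} - N \<in> sets borel" using N by auto
  then obtain v where v: "v \<noteq> 0" "scalar_measure \<mu> v ({0<..} - N) \<le> 0"
    by (rule exists_scalar_measure_le_0[OF pos assms(5) _ Diff_subset])
  obtain B where B: "B holomorphic_on {z. Im z > 0}" "\<And>z. Im z > 0 \<Longrightarrow> norm (B z) \<le> 1"
    "\<And>l. l \<in> N \<Longrightarrow> B (Complex 0 l) = 0" "\<And>z. Im z > 0 \<Longrightarrow> Re z \<noteq> 0 \<Longrightarrow> B z \<noteq> 0"
    by (rule blaschke_product_vanishing_on_imaginary_axis[OF assms(2-4)]) (rule that)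
  define f where "f z = cscale (B z / (z + \<i>)) v" for z
  have "f \<in> hardy2"
    unfolding f_def[abs_def] using B(1,2) by (rule cscale_div_add_ii_in_hardy2)
  moreover have "\<exists>z. Im z > 0 \<and> f z \<noteq> 0"
  proof (intro exI conjI)
    have "Complex 1 1 + \<i> \<noteq> 0" by (simp add: complex_eq_iff)
    then show "f (Complex 1 1) \<noteq> 0"
      using B(4)[of "Complex 1 1"] v(1) by (simp add: f_def cscale_eq_0_iff)
  qed simp
  ultimately have "Re (carleson_form \<mu> f f) > 0"
    using H unfolding H_mu_strictly_positive_def by blast
  moreover have "carleson_form \<mu> f f = 0"
    unfolding carleson_form_def on_iaxis_def f_def
    using continuous_on_imaginary_axis[OF holomorphic_on_div_add_ii[OF B(1)]] B(3)
    by (intro op_int_cscale_self_eq_0[OF pos v(2) N]) auto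
  ultimately show False by simp
qed

end
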